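(* Let $X$ be a strictly convex complex Banach space and let $J:X\to X^*$ be any duality section of $X$. Let $x\in X$ be a unit vector and let $T=\{e^{tA}:t\ge 0\}$ be a $(C_0)$ contraction semigroup with generator $A$ such that \[\lim_{t\to\infty}|\langle T(t)x,J(x)\rangle| = 1.\] Then $x$ is in the domain of $A$ and $Ax=i\lambda x$ for some real number $\lambda$; i.e. $x$ is an eigenvector of $A$ corresponding to a purely imaginary eigenvalue.
   Context: For a complex Banach space $X$, a functional $x^*\in X^*$ is called dual to $x\in X$ if $\langle x,x^*\rangle = \|x^*\|\|x\| = \|x^*\|^2=\|x\|^2$. A map $J:X\to X^*$ is a duality section if $J(x)$ is dual to $x$ for every $x\in X$. $X$ is strictly convex if for any two unit vectors $x,y$, either $x=y$ or $\|x+y\|<2$. *)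

theory Defs
  imports "HOL-Analysis.Analysis"
begin

text \<open>A complex Banach space is modelled as a real Banach space (type class banach)
together with a complex structure ci (multiplication by the imaginary unit),
which is real-linear, squares to minus the identity, and is compatible with the
norm: the norm of (a + i b) x equals |a + i b| times the norm of x.\<close>

definition complex_structure :: "('a::real_normed_vector \<Rightarrow> 'a) \<Rightarrow> bool" where
  "complex_structure ci \<longleftrightarrow> linear ci \<and> (\<forall>x. ci (ci x) = - x) \<and>
     (\<forall>a b x. norm (a *\<^sub>R x + b *\<^sub>R ci x) = cmod (Complex a b) * norm x)"

definition cscale :: "('a::real_normed_vector \<Rightarrow> 'a) \<Rightarrow> complex \<Rightarrow> 'a \<Rightarrow> 'a" where
  "cscale ci z x = Re z *\<^sub>R x + Im z *\<^sub>R ci x"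

definition complex_bounded_linear ::
  "('a::real_normed_vector \<Rightarrow> 'a) \<Rightarrow> ('a \<Rightarrow> 'a) \<Rightarrow> bool" where
  "complex_bounded_linear ci L \<longleftrightarrow> bounded_linear L \<and> (\<forall>x. L (ci x) = ci (L x))"

definition dual_functional :: "('a::real_normed_vector \<Rightarrow> 'a) \<Rightarrow> ('a \<Rightarrow> complex) \<Rightarrow> bool" where
  "dual_functional ci f \<longleftrightarrow> bounded_linear f \<and> (\<forall>x. f (ci x) = \<i> * f x)"

definition is_dual_to :: "('a::real_normed_vector \<Rightarrow> 'a) \<Rightarrow> ('a \<Rightarrow> complex) \<Rightarrow> 'a \<Rightarrow> bool" where
  "is_dual_to ci f x \<longleftrightarrow> dual_functional ci f \<and>
     f x = complex_of_real (onorm f * norm x) \<and>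
     onorm f * norm x = (onorm f)\<^sup>2 \<and> (onorm f)\<^sup>2 = (norm x)\<^sup>2"

definition duality_section :: "('a::real_normed_vector \<Rightarrow> 'a) \<Rightarrow> ('a \<Rightarrow> 'a \<Rightarrow> complex) \<Rightarrow> bool" where
  "duality_section ci J \<longleftrightarrow> (\<forall>x. is_dual_to ci (J x) x)"

definition strictly_convex :: "'a::real_normed_vector itself \<Rightarrow> bool" where
  "strictly_convex _ \<longleftrightarrow> (\<forall>x y::'a. norm x = 1 \<longrightarrow> norm y = 1 \<longrightarrow> x \<noteq> y \<longrightarrow> norm (x + y) < 2)"

definition C0_contraction_semigroup ::
  "('a::real_normed_vector \<Rightarrow> 'a) \<Rightarrow> (real \<Rightarrow> 'a \<Rightarrow> 'a) \<Rightarrow> bool" where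
  "C0_contraction_semigroup ci T \<longleftrightarrow>
     (\<forall>t\<ge>0. complex_bounded_linear ci (T t)) \<and>
     T 0 = id \<and>
     (\<forall>s\<ge>0. \<forall>t\<ge>0. T (s + t) = T s \<circ> T t) \<and>
     (\<forall>x. ((\<lambda>t. T t x) \<longlongrightarrow> x) (at_right 0)) \<and>
     (\<forall>t\<ge>0. onorm (T t) \<le> 1)"

text \<open>Graph of the generator A: x \<in> D(A) and A x = y.\<close>
definition generator_graph :: "(real \<Rightarrow> 'a::real_normed_vector \<Rightarrow> 'a) \<Rightarrow> 'a \<Rightarrow> 'a \<Rightarrow> bool" where
  "generator_graph T x y \<longleftrightarrow> ((\<lambda>h. inverse h *\<^sub>R (T h x - x)) \<longlongrightarrow> y) (at_right 0)"

end

theory Submission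
  imports Defs
begin

text \<open>Let \<open>f = J x\<close>, so that \<open>\<parallel>f\<parallel> = 1 = f x\<close>, and put \<open>\<phi> t = f (T t x)\<close>. Fix \<open>s \<ge> 0\<close>.
For every \<open>t \<ge> 0\<close> some unimodular \<open>c\<close> aligns the phases of \<open>\<phi> t\<close> and \<open>c \<phi> (s + t)\<close>, so
that \<open>\<parallel>x + c T s x\<parallel> \<ge> \<parallel>T t (x + c T s x)\<parallel> \<ge> |\<phi> t| + |\<phi> (s + t)|\<close>, and the right-hand side
tends to 2. By compactness of the unit circle, \<open>\<parallel>x + c T s x\<parallel> \<ge> 2\<close> for some unimodular \<open>c\<close>,
and strict convexity forces \<open>c T s x = x\<close>. Hence \<open>T s x = \<phi> s x\<close> with \<open>|\<phi> s| = 1\<close>, and \<open>\<phi>\<close>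
is a multiplicative function on \<open>[0, \<infinity>)\<close>, continuous at 0. Such a function is continuous,
and with \<open>\<Phi> u = \<integral>\<^sub>0\<^sup>u \<phi>\<close> the identity \<open>\<phi> h \<Phi> \<delta> = \<Phi> (h + \<delta>) - \<Phi> h\<close>, for a \<open>\<delta>\<close> with
\<open>\<Phi> \<delta> \<noteq> 0\<close>, makes it right differentiable at 0; since \<open>|\<phi>| = 1\<close>, the derivative is
purely imaginary.\<close>

lemma cscale_one [simp]: "cscale ci 1 y = y"
  unfolding cscale_def by simp

lemma cscale_diff: "cscale ci a y - cscale ci b y = cscale ci (a - b) y"
  unfolding cscale_def by (simp add: algebra_simps)

lemma scaleR_cscale: "r *\<^sub>R cscale ci a y = cscale ci (of_real r * a) y"
  unfolding cscale_def by (simp add: algebra_simps)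

lemma tendsto_cscale:
  "(c \<longlongrightarrow> d) F \<Longrightarrow> ((\<lambda>h. cscale ci (c h) y) \<longlongrightarrow> cscale ci d y) F"
  unfolding cscale_def by (intro tendsto_intros tendsto_Re tendsto_Im)

lemma cscale_cscale:
  assumes "complex_structure ci"
  shows "cscale ci a (cscale ci b y) = cscale ci (a * b) y"
proof -
  have "linear ci" "ci (ci y) = - y" using assms unfolding complex_structure_def by auto
  then show ?thesis unfolding cscale_def by (simp add: linear_add linear_cmul algebra_simps)
qed

lemma norm_cscale:
  assumes "complex_structure ci"
  shows "norm (cscale ci c y) = cmod c * norm y"
  using assms unfolding complex_structure_def cscale_def by (simp add: complex.collapse)

lemma dual_functional_cscale:
  assumes "dual_functional ci f"
  shows "f (cscale ci c y) = c * f y"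
proof -
  interpret bounded_linear f using assms unfolding dual_functional_def by auto
  have "f (cscale ci c y) = (of_real (Re c) + \<i> * of_real (Im c)) * f y"
    using assms unfolding cscale_def dual_functional_def
    by (simp add: add scale scaleR_conv_of_real algebra_simps)
  also have "of_real (Re c) + \<i> * of_real (Im c) = c" by (simp add: complex_eq_iff)
  finally show ?thesis .
qed

lemma complex_bounded_linear_cscale:
  assumes "complex_bounded_linear ci L"
  shows "L (cscale ci c y) = cscale ci c (L y)"
proof -
  interpret bounded_linear L using assms unfolding complex_bounded_linear_def by auto
  show ?thesis using assms unfolding cscale_def complex_bounded_linear_def by (simp add: add scale)
qed

lemma is_dual_to_unit_vector:
  assumes "is_dual_to ci f x" "norm x = 1"
  shows "f x = 1" and "cmod (f y) \<le> norm y"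
proof -
  have bl: "bounded_linear f" using assms(1) unfolding is_dual_to_def dual_functional_def by auto
  have "(onorm f)\<^sup>2 = 1" "onorm f \<ge> 0" using assms onorm_pos_le[OF bl] unfolding is_dual_to_def by auto
  then have "onorm f = 1" by (simp add: power2_eq_1_iff)
  then show "f x = 1" "cmod (f y) \<le> norm y"
    using assms onorm[OF bl, of y] unfolding is_dual_to_def by auto
qed

lemma complex_align_phases: "\<exists>c. cmod c = 1 \<and> cmod (a + c * b) = cmod a + cmod b"
proof (cases "a = 0 \<or> b = 0")
  case True
  then show ?thesis by (intro exI[of _ 1]) auto
next
  case False
  then have "a + (sgn a / sgn b) * b = sgn a * of_real (cmod a + cmod b)"
    by (simp add: sgn_eq field_simps)
  then have "cmod (a + (sgn a / sgn b) * b) = cmod a + cmod b"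
    using False by (simp add: norm_mult norm_sgn del: of_real_add)
  with False show ?thesis by (intro exI[of _ "sgn a / sgn b"]) (simp add: norm_divide norm_sgn)
qed

lemma strictly_convex_eq_if_norm_add_ge:
  fixes x v :: "'a::real_normed_vector"
  assumes "strictly_convex TYPE('a)" "norm x = 1" "norm v \<le> 1" "2 \<le> norm (x + v)"
  shows "v = x"
proof -
  have "norm (x + v) \<le> norm x + norm v" by (rule norm_triangle_ineq)
  then have "norm v = 1" "\<not> norm (x + v) < 2" using assms(2-4) by auto
  then show ?thesis using assms(1,2) unfolding strictly_convex_def by metis
qed

lemma strictly_convex_rotation_eq:
  fixes x w :: "'a::real_normed_vector"
  assumes cs: "complex_structure ci" and sc: "strictly_convex TYPE('a)"
    and "norm x = 1" "norm w \<le> 1"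
    and almost: "\<And>\<epsilon>. \<epsilon> > 0 \<Longrightarrow> \<exists>c. cmod c = 1 \<and> 2 - \<epsilon> \<le> norm (x + cscale ci c w)"
  shows "\<exists>c. cmod c = 1 \<and> w = cscale ci c x"
proof -
  have "continuous_on (sphere 0 1) (\<lambda>c. norm (x + cscale ci c w))"
    unfolding cscale_def by (intro continuous_intros)
  moreover have "sphere (0::complex) 1 \<noteq> {}" using mem_sphere_0[of 1] by auto
  ultimately obtain c0 where "c0 \<in> sphere 0 1"
    and "\<forall>c \<in> sphere 0 1. norm (x + cscale ci c w) \<le> norm (x + cscale ci c0 w)"
    using continuous_attains_sup[OF compact_sphere] by blast
  then have c0: "cmod c0 = 1"
    and max: "\<And>c. cmod c = 1 \<Longrightarrow> norm (x + cscale ci c w) \<le> norm (x + cscale ci c0 w)"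
    by auto
  have "2 \<le> norm (x + cscale ci c0 w)"
  proof (rule field_le_epsilon)
    fix \<epsilon> :: real assume "\<epsilon> > 0"
    then obtain c where "cmod c = 1" "2 - \<epsilon> \<le> norm (x + cscale ci c w)" using almost by blast
    then show "2 \<le> norm (x + cscale ci c0 w) + \<epsilon>" using max[of c] by linarith
  qed
  then have "cscale ci c0 w = x"
    using strictly_convex_eq_if_norm_add_ge[OF sc] assms c0 by (simp add: norm_cscale)
  moreover have "cnj c0 * c0 = 1" using c0 complex_norm_square[of c0] by (simp add: mult.commute)
  ultimately have "w = cscale ci (cnj c0) x" using cscale_cscale[OF cs, of "cnj c0" c0 w] by simp
  then show ?thesis using c0 by (intro exI[of _ "cnj c0"]) simp
qed

lemma C0_contraction_semigroup_norm_le: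
  assumes "C0_contraction_semigroup ci T" "t \<ge> 0"
  shows "norm (T t y) \<le> norm y"
proof -
  have "bounded_linear (T t)" "onorm (T t) \<le> 1"
    using assms unfolding C0_contraction_semigroup_def complex_bounded_linear_def by auto
  then show ?thesis by (metis mult_left_le_one_le norm_ge_zero onorm onorm_pos_le order_trans)
qed

lemma C0_contraction_semigroup_phase_bound:
  assumes f: "dual_functional ci f" "\<And>y. cmod (f y) \<le> norm y"
    and T: "C0_contraction_semigroup ci T" and "s \<ge> 0" "t \<ge> 0"
  shows "\<exists>c. cmod c = 1 \<and>
    cmod (f (T t x)) + cmod (f (T (s + t) x)) \<le> norm (x + cscale ci c (T s x))"
proof -
  obtain c where c: "cmod c = 1"
    "cmod (f (T t x) + c * f (T (s + t) x)) = cmod (f (T t x)) + cmod (f (T (s + t) x))"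
    using complex_align_phases by blast
  have Tt: "complex_bounded_linear ci (T t)" and "T (t + s) = T t \<circ> T s"
    using T \<open>s \<ge> 0\<close> \<open>t \<ge> 0\<close> unfolding C0_contraction_semigroup_def by auto
  then have "T t (x + cscale ci c (T s x)) = T t x + cscale ci c (T (s + t) x)"
    using complex_bounded_linear_cscale[OF Tt] linear_add[of "T t"]
    by (simp add: complex_bounded_linear_def bounded_linear.linear add.commute)
  then have "f (T t (x + cscale ci c (T s x))) = f (T t x) + c * f (T (s + t) x)"
    using f(1) dual_functional_cscale[OF f(1)] linear_add[of f]
    by (simp add: dual_functional_def bounded_linear.linear)
  then have "cmod (f (T t x)) + cmod (f (T (s + t) x)) \<le> norm (T t (x + cscale ci c (T s x)))"
    using c(2) f(2) by metis
  also have "\<dots> \<le> norm (x + cscale ci c (T s x))"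
    using C0_contraction_semigroup_norm_le[OF T \<open>t \<ge> 0\<close>] .
  finally show ?thesis using c(1) by blast
qed

lemma C0_contraction_semigroup_eigenvector:
  fixes x :: "'a::real_normed_vector"
  assumes cs: "complex_structure ci" and sc: "strictly_convex TYPE('a)"
    and dual: "is_dual_to ci f x" and x: "norm x = 1" and T: "C0_contraction_semigroup ci T"
    and lim: "((\<lambda>t. cmod (f (T t x))) \<longlongrightarrow> 1) at_top" and "s \<ge> 0"
  shows "T s x = cscale ci (f (T s x)) x \<and> cmod (f (T s x)) = 1"
proof -
  have df: "dual_functional ci f" using dual unfolding is_dual_to_def by auto
  note f = is_dual_to_unit_vector[OF dual x]
  have lim_shift: "((\<lambda>t. cmod (f (T (s + t) x))) \<longlongrightarrow> 1) at_top"
    by (rule filterlim_compose[OF lim filterlim_tendsto_add_at_top[OF tendsto_const filterlim_ident]])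
  have "\<exists>c. cmod c = 1 \<and> T s x = cscale ci c x"
  proof (rule strictly_convex_rotation_eq[OF cs sc x])
    show "norm (T s x) \<le> 1" using C0_contraction_semigroup_norm_le[OF T \<open>s \<ge> 0\<close>, of x] x by simp
    fix \<epsilon> :: real assume "\<epsilon> > 0"
    have "((\<lambda>t. cmod (f (T t x)) + cmod (f (T (s + t) x))) \<longlongrightarrow> 1 + 1) at_top"
      by (intro tendsto_add lim lim_shift)
    then have "eventually (\<lambda>t. 2 - \<epsilon> < cmod (f (T t x)) + cmod (f (T (s + t) x)) \<and> t \<ge> 0) at_top"
      using \<open>\<epsilon> > 0\<close> by (intro eventually_conj order_tendstoD(1) eventually_ge_at_top) auto
    then obtain t where "2 - \<epsilon> < cmod (f (T t x)) + cmod (f (T (s + t) x))" "t \<ge> 0"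
      using eventually_happens'[OF trivial_limit_at_top_linorder] by blast
    then show "\<exists>c. cmod c = 1 \<and> 2 - \<epsilon> \<le> norm (x + cscale ci c (T s x))"
      using C0_contraction_semigroup_phase_bound[OF df f(2) T \<open>s \<ge> 0\<close>, of t x] by force
  qed
  then show ?thesis using dual_functional_cscale[OF df] f(1) by auto
qed

lemma C0_contraction_semigroup_eigenvalue_mult:
  assumes T: "C0_contraction_semigroup ci T" and f: "dual_functional ci f"
    and eigen: "\<And>s. s \<ge> 0 \<Longrightarrow> T s x = cscale ci (f (T s x)) x"
    and "s \<ge> 0" "t \<ge> 0"
  shows "f (T (s + t) x) = f (T s x) * f (T t x)"
proof -
  have "T (s + t) x = T s (cscale ci (f (T t x)) x)"
    using T eigen[OF \<open>t \<ge> 0\<close>] \<open>s \<ge> 0\<close> \<open>t \<ge> 0\<close> unfolding C0_contraction_semigroup_def by simp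
  also have "\<dots> = cscale ci (f (T t x)) (T s x)"
    using T \<open>s \<ge> 0\<close> unfolding C0_contraction_semigroup_def by (simp add: complex_bounded_linear_cscale)
  finally show ?thesis by (simp add: dual_functional_cscale[OF f] mult.commute)
qed

lemma semigroup_hom_continuous_on:
  fixes \<phi> :: "real \<Rightarrow> 'a::real_normed_field"
  assumes mult: "\<And>s t. s \<ge> 0 \<Longrightarrow> t \<ge> 0 \<Longrightarrow> \<phi> (s + t) = \<phi> s * \<phi> t"
    and nonzero: "\<And>s. s \<ge> 0 \<Longrightarrow> \<phi> s \<noteq> 0"
    and lim: "(\<phi> \<longlongrightarrow> 1) (at_right 0)"
  shows "continuous_on {0..} \<phi>"
proof -
  have right: "(\<phi> \<longlongrightarrow> \<phi> t) (at_right t)" if "t \<ge> 0" for t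
  proof -
    have "((\<lambda>h. \<phi> h * \<phi> t) \<longlongrightarrow> 1 * \<phi> t) (at_right 0)"
      by (intro tendsto_mult lim tendsto_const)
    moreover have "eventually (\<lambda>h. \<phi> h * \<phi> t = \<phi> (h + t)) (at_right 0)"
      using eventually_at_right_less[of "0::real"] by eventually_elim (use that mult in auto)
    ultimately have "((\<lambda>h. \<phi> (h + t)) \<longlongrightarrow> \<phi> t) (at_right 0)"
      by (simp add: tendsto_cong)
    then show ?thesis by (simp add: filterlim_at_right_to_0[of _ _ t])
  qed
  have left: "(\<phi> \<longlongrightarrow> \<phi> t) (at_left t)" if "t > 0" for t
  proof -
    have "((\<lambda>h. \<phi> t / \<phi> h) \<longlongrightarrow> \<phi> t / 1) (at_right 0)"
      by (intro tendsto_divide lim tendsto_const) auto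
    moreover have "eventually (\<lambda>h. 0 < h \<and> h < t) (at_right 0)"
      using eventually_at_right_less[of "0::real"] eventually_at_right[of 0 t] that
      by (auto intro: eventually_conj)
    then have "eventually (\<lambda>h. \<phi> t / \<phi> h = \<phi> (- (h + - t))) (at_right 0)"
    proof eventually_elim
      case (elim h)
      then have "\<phi> t = \<phi> (t - h) * \<phi> h" using mult[of "t - h" h] by auto
      then show ?case using nonzero[of h] elim by (auto simp: field_simps)
    qed
    ultimately have "((\<lambda>h. \<phi> (- (h + - t))) \<longlongrightarrow> \<phi> t) (at_right 0)"
      by (simp add: tendsto_cong)
    then show ?thesis
      by (simp add: filterlim_at_left_to_right filterlim_at_right_to_0[of _ _ "-t"])
  qed
  show ?thesis unfolding continuous_on_def
  proof
    fix t :: real assume t: "t \<in> {0..}"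
    show "(\<phi> \<longlongrightarrow> \<phi> t) (at t within {0..})"
    proof (cases "t = 0")
      case True then show ?thesis using right[of 0] by (simp add: at_within_Ici_at_right)
    next
      case False
      then have "(\<phi> \<longlongrightarrow> \<phi> t) (at t)" using right left t by (auto intro: filterlim_split_at)
      then show ?thesis by (rule tendsto_mono[rotated]) (simp add: at_le)
    qed
  qed
qed

lemma has_vector_derivative_right_quotient:
  fixes F :: "real \<Rightarrow> 'a::real_normed_field"
  assumes "(F has_vector_derivative d) (at v within {a..b})" "a \<le> v" "v < b"
  shows "((\<lambda>h. (F (v + h) - F v) / of_real h) \<longlongrightarrow> d) (at_right 0)"
proof -
  have "at_right v = at v within {v<..b}"
    by (rule at_within_nhd[of v "{..<b}"]) (use assms in auto)
  then have le: "at_right v \<le> at v within {a..b}"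
    using assms by (metis at_le greaterThanAtMost_subseteq_atLeastAtMost_iff order_refl)
  from assms(1) have "((\<lambda>y. ((F y - F v) - (y - v) *\<^sub>R d) /\<^sub>R norm (y - v)) \<longlongrightarrow> 0) (at v within {a..b})"
    unfolding has_vector_derivative_def has_derivative_at_within by auto
  then have "((\<lambda>y. ((F y - F v) - (y - v) *\<^sub>R d) /\<^sub>R norm (y - v) + d) \<longlongrightarrow> 0 + d) (at_right v)"
    using le tendsto_mono by (blast intro: tendsto_add tendsto_const)
  moreover have "eventually (\<lambda>y. ((F y - F v) - (y - v) *\<^sub>R d) /\<^sub>R norm (y - v) + d =
      (F y - F v) / of_real (y - v)) (at_right v)"
    using eventually_at_right_less[of v]
  proof eventually_elim
    case (elim y)
    then have "y - v \<noteq> 0" "norm (y - v) = y - v" by auto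
    then show ?case by (simp add: scaleR_conv_of_real field_simps)
  qed
  ultimately have "((\<lambda>y. (F y - F v) / of_real (y - v)) \<longlongrightarrow> d) (at_right v)"
    by (simp add: tendsto_cong)
  then show ?thesis by (simp add: filterlim_at_right_to_0[of _ _ v] add.commute)
qed

lemma semigroup_hom_right_derivative_exists:
  fixes \<phi> :: "real \<Rightarrow> 'a::{real_normed_field, banach}"
  assumes one: "\<phi> 0 = 1"
    and mult: "\<And>s t. s \<ge> 0 \<Longrightarrow> t \<ge> 0 \<Longrightarrow> \<phi> (s + t) = \<phi> s * \<phi> t"
    and nonzero: "\<And>s. s \<ge> 0 \<Longrightarrow> \<phi> s \<noteq> 0"
    and lim: "(\<phi> \<longlongrightarrow> 1) (at_right 0)"
  shows "\<exists>d. ((\<lambda>h. (\<phi> h - 1) / of_real h) \<longlongrightarrow> d) (at_right 0)"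
proof -
  have cont: "continuous_on {0..b} \<phi>" for b
    by (rule continuous_on_subset[OF semigroup_hom_continuous_on[OF mult nonzero lim]]) auto
  define \<Phi> where "\<Phi> u = integral {0..u} \<phi>" for u
  have quotient: "((\<lambda>h. (\<Phi> (v + h) - \<Phi> v) / of_real h) \<longlongrightarrow> \<phi> v) (at_right 0)"
    if "0 \<le> v" "v < 2" for v
    using has_vector_derivative_right_quotient[OF integral_has_vector_derivative[OF cont]] that
    unfolding \<Phi>_def by auto
  have quotient0: "((\<lambda>h. (\<Phi> h - \<Phi> 0) / of_real h) \<longlongrightarrow> 1) (at_right 0)"
    using quotient[of 0] one by simp
  obtain \<delta> where \<delta>: "0 < \<delta>" "\<delta> \<le> 1" "\<Phi> \<delta> \<noteq> 0"
  proof -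
    have "eventually (\<lambda>h. dist ((\<Phi> h - \<Phi> 0) / of_real h) 1 < 1) (at_right 0)"
      using tendsto_iff[THEN iffD1, OF quotient0, rule_format, of 1] by simp
    then obtain b where b: "b > 0"
      "\<And>h. 0 < h \<Longrightarrow> h < b \<Longrightarrow> dist ((\<Phi> h - \<Phi> 0) / of_real h) 1 < 1"
      unfolding eventually_at_right_field by auto
    have "dist ((\<Phi> (min (b/2) 1) - \<Phi> 0) / of_real (min (b/2) 1)) 1 < 1"
      using b by auto
    then have "\<Phi> (min (b/2) 1) \<noteq> 0" by (auto simp: \<Phi>_def)
    then show ?thesis using that[of "min (b/2) 1"] b by auto
  qed
  have shift: "\<Phi> (s + \<delta>) - \<Phi> s = \<phi> s * \<Phi> \<delta>" if "s \<ge> 0" for s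
  proof -
    have "\<phi> integrable_on {0..s + \<delta>}"
      using cont integrable_continuous_interval by blast
    then have "\<Phi> (s + \<delta>) - \<Phi> s = integral {s..s + \<delta>} \<phi>"
      using Henstock_Kurzweil_Integration.integral_combine[where f=\<phi> and a=0 and c=s and b="s + \<delta>"]
        that \<delta> unfolding \<Phi>_def by (simp add: algebra_simps)
    also have "\<dots> = integral {0..\<delta>} (\<lambda>u. \<phi> (u + s))"
      using integral_shift_real_ivl[of s s "s + \<delta>" \<phi>] by simp
    also have "\<dots> = integral {0..\<delta>} (\<lambda>u. \<phi> s * \<phi> u)"
      by (rule integral_cong) (metis mult that add.commute atLeastAtMost_iff)
    finally show ?thesis unfolding \<Phi>_def by simp
  qed
  have "((\<lambda>h. ((\<Phi> (\<delta> + h) - \<Phi> \<delta>) / of_real h - (\<Phi> h - \<Phi> 0) / of_real h) / \<Phi> \<delta>)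
      \<longlongrightarrow> (\<phi> \<delta> - 1) / \<Phi> \<delta>) (at_right 0)"
    using \<delta> by (intro tendsto_divide tendsto_diff quotient quotient0 tendsto_const) auto
  moreover have "eventually (\<lambda>h. ((\<Phi> (\<delta> + h) - \<Phi> \<delta>) / of_real h - (\<Phi> h - \<Phi> 0) / of_real h) / \<Phi> \<delta>
      = (\<phi> h - 1) / of_real h) (at_right 0)"
    using eventually_at_right_less[of "0::real"]
  proof eventually_elim
    case (elim h)
    have "\<Phi> (h + \<delta>) - \<Phi> h = \<phi> h * \<Phi> \<delta>" using shift[of h] elim by simp
    moreover have "\<Phi> (0 + \<delta>) - \<Phi> 0 = \<phi> 0 * \<Phi> \<delta>" using shift[of 0] by simp
    ultimately show ?case using \<delta> elim one by (simp add: field_simps add.commute)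
  qed
  ultimately show ?thesis by (auto simp: tendsto_cong)
qed

lemma unimodular_right_derivative_imaginary:
  fixes \<phi> :: "real \<Rightarrow> complex"
  assumes unit: "\<And>h. h > 0 \<Longrightarrow> cmod (\<phi> h) = 1"
    and deriv: "((\<lambda>h. (\<phi> h - 1) / of_real h) \<longlongrightarrow> d) (at_right 0)"
  shows "Re d = 0"
proof -
  define q where "q h = (\<phi> h - 1) / of_real h" for h
  \<comment> \<open>On the unit circle \<open>|\<phi> - 1|\<^sup>2 = -2 Re (\<phi> - 1)\<close>.\<close>
  have "eventually (\<lambda>h. - (h / 2) * (cmod (q h))\<^sup>2 = Re (q h)) (at_right 0)"
    using eventually_at_right_less[of "0::real"]
  proof eventually_elim
    case (elim h)
    have u: "(Re (\<phi> h))\<^sup>2 + (Im (\<phi> h))\<^sup>2 = 1" using unit[of h] elim cmod_power2[of "\<phi> h"] by simp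
    have "(cmod (q h))\<^sup>2 = ((Re (\<phi> h) - 1)\<^sup>2 + (Im (\<phi> h))\<^sup>2) / h\<^sup>2"
      unfolding q_def using elim by (simp add: norm_divide cmod_power2 power_divide)
    also have "\<dots> = (2 - 2 * Re (\<phi> h)) / h\<^sup>2" using u by (simp add: power2_eq_square algebra_simps)
    finally show ?case
      using elim by (simp add: q_def Re_divide_of_real field_simps power2_eq_square)
  qed
  moreover have "((\<lambda>h. - (h / 2) * (cmod (q h))\<^sup>2) \<longlongrightarrow> - (0 / 2) * (cmod d)\<^sup>2) (at_right 0)"
    unfolding q_def by (intro tendsto_intros deriv) auto
  ultimately have "((\<lambda>h. Re (q h)) \<longlongrightarrow> 0) (at_right 0)"
    by (simp add: tendsto_cong)
  moreover have "((\<lambda>h. Re (q h)) \<longlongrightarrow> Re d) (at_right 0)"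
    unfolding q_def by (intro tendsto_Re deriv)
  ultimately show ?thesis by (metis tendsto_unique trivial_limit_at_right_real)
qed

lemma eigenvector_generator_graph:
  assumes "\<And>h. h > 0 \<Longrightarrow> T h x = cscale ci (\<phi> h) x"
    and "((\<lambda>h. (\<phi> h - 1) / of_real h) \<longlongrightarrow> d) (at_right 0)"
  shows "generator_graph T x (cscale ci d x)"
proof -
  have "eventually (\<lambda>h. cscale ci ((\<phi> h - 1) / of_real h) x = inverse h *\<^sub>R (T h x - x)) (at_right 0)"
    using eventually_at_right_less[of "0::real"]
  proof eventually_elim
    case (elim h)
    then have "inverse h *\<^sub>R (T h x - x) = cscale ci (of_real (inverse h) * (\<phi> h - 1)) x"
      using assms(1) by (metis cscale_diff cscale_one scaleR_cscale)
    then show ?case by (simp add: divide_inverse mult.commute)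
  qed
  then show ?thesis
    unfolding generator_graph_def by (rule Lim_transform_eventually[OF tendsto_cscale[OF assms(2)]])
qed

theorem theorem3:
  fixes ci :: "'a::banach \<Rightarrow> 'a"
    and J :: "'a \<Rightarrow> 'a \<Rightarrow> complex"
    and T :: "real \<Rightarrow> 'a \<Rightarrow> 'a"
    and x :: 'a
  assumes "complex_structure ci"
    and "strictly_convex TYPE('a)"
    and "duality_section ci J"
    and "norm x = 1"
    and "C0_contraction_semigroup ci T"
    and "((\<lambda>t. cmod (J x (T t x))) \<longlongrightarrow> 1) at_top"
  shows "\<exists>lam::real. generator_graph T x (cscale ci (\<i> * complex_of_real lam) x)"
proof -
  define \<phi> where "\<phi> t = J x (T t x)" for t
  have dual: "is_dual_to ci (J x) x" using assms(3) unfolding duality_section_def by auto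
  then have f: "dual_functional ci (J x)" "bounded_linear (J x)" "J x x = 1"
    using is_dual_to_unit_vector(1)[OF _ assms(4)] unfolding is_dual_to_def dual_functional_def by auto
  have eigen: "T s x = cscale ci (\<phi> s) x" "cmod (\<phi> s) = 1" if "s \<ge> 0" for s
    using C0_contraction_semigroup_eigenvector[OF assms(1,2) dual assms(4,5,6) that]
    unfolding \<phi>_def by auto
  have mult: "\<phi> (s + t) = \<phi> s * \<phi> t" if "s \<ge> 0" "t \<ge> 0" for s t
    using C0_contraction_semigroup_eigenvalue_mult[OF assms(5) f(1) _ that] eigen(1)
    unfolding \<phi>_def by blast
  have T: "T 0 = id" "((\<lambda>t. T t x) \<longlongrightarrow> x) (at_right 0)"
    using assms(5) unfolding C0_contraction_semigroup_def by auto
  have "\<phi> 0 = 1" "(\<phi> \<longlongrightarrow> 1) (at_right 0)"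
    using f(3) bounded_linear.tendsto[OF f(2) T(2)] unfolding \<phi>_def T(1) by auto
  then obtain d where d: "((\<lambda>h. (\<phi> h - 1) / of_real h) \<longlongrightarrow> d) (at_right 0)"
    using semigroup_hom_right_derivative_exists[OF _ mult] eigen(2) by fastforce
  then have "d = \<i> * of_real (Im d)"
    using unimodular_right_derivative_imaginary[of \<phi>] eigen(2) by (simp add: complex_eq_iff)
  then show ?thesis using eigenvector_generator_graph[OF _ d] eigen(1) by (metis less_imp_le)
qed

end
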